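(* $$\int_1^{+\infty}\frac{\{x\}^2}{x^2}\,\mathrm{d}x=\sum_{n=0}^{+\infty}\ell_n^2=\log(2\pi)-\gamma_0-1 .$$
   Context: $\{x\}=x-\lfloor x\rfloor$; $\gamma_0$ is the Euler–Mascheroni constant. With Stieltjes constants $\gamma_n=\lim_{N\to\infty}\left(\sum_{k=1}^N\frac{\log^n k}{k}-\frac{\log^{n+1}N}{n+1}\right)$, $\ell_0=\gamma_0-1$ and $\ell_n=\sum_{k=1}^n\binom{n-1}{k-1}\frac{(-1)^{n-k}}{k!}\gamma_k$ for $n\ge1$. *)

theory Defs
  imports "HOL-Analysis.Analysis"
begin

definition stieltjes :: "nat \<Rightarrow> real" where
  "stieltjes n = lim (\<lambda>N::nat. (\<Sum>k=1..N. ln (real k) ^ n / real k)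
                                  - ln (real N) ^ (Suc n) / real (Suc n))"

definition ell :: "nat \<Rightarrow> real" where
  "ell n = (if n = 0 then euler_mascheroni - 1
            else (\<Sum>k=1..n. real ((n - 1) choose (k - 1)) * (-1) ^ (n - k) / fact k * stieltjes k))"

end

theory Submission
  imports Defs "HOL-Real_Asymp.Real_Asymp"
begin

text \<open>
  The substitution \<open>x = e\<^sup>t\<close> identifies \<open>L\<^sup>2([1,\<infinity>), dx)\<close> with \<open>L\<^sup>2([0,\<infinity>), e\<^sup>-\<^sup>t dt)\<close>,
  so the functions \<open>\<psi>\<^sub>n(x) = L\<^sub>n(ln x)/x\<close>, with \<open>L\<^sub>n\<close> the Laguerre polynomials, are orthonormal
  on \<open>[1,\<infinity>)\<close>. For the functions \<open>p(1/x)/x\<close>, \<open>p\<close> a polynomial, Parseval's identity is checked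
  by a direct computation, and \<open>{x}/x\<close> is an \<open>L\<^sup>2\<close>-limit of such functions (cut off \<open>{x}\<close>
  continuously near the integers and apply Weierstrass' theorem in the variable \<open>1/x\<close>). Hence
  \<open>\<integral>\<^sub>1\<^sup>\<infinity> {x}\<^sup>2/x\<^sup>2 dx\<close> is the sum of the squared coefficients of \<open>{x}/x\<close>. These are \<open>\<plusminus>\<ell>\<^sub>n\<close>:
  integrating over the intervals \<open>[N, N+1]\<close> expresses \<open>\<integral>\<^sub>1\<^sup>\<infinity> {x} ln\<^sup>k x / x\<^sup>2 dx\<close> through the
  Stieltjes constants. The same piecewise integration gives \<open>\<integral>\<^sub>1\<^sup>N {x}\<^sup>2/x\<^sup>2 dx\<close> in terms of
  \<open>ln N!\<close>, and its limit is then fixed by Stirling's constant \<open>ln (2\<pi>)/2\<close>, which follows from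
  Wallis' product.
\<close>

fun log_moment_primitive :: "nat \<Rightarrow> nat \<Rightarrow> real \<Rightarrow> real" where
  "log_moment_primitive b 0 x = -1 / (real b * x ^ b)"
| "log_moment_primitive b (Suc j) x =
     - (ln x ^ Suc j) / (real b * x ^ b) + real (Suc j) / real b * log_moment_primitive b j x"

lemma log_moment_primitive_has_derivative:
  assumes "x > 0" "b > 0"
  shows "(log_moment_primitive b j has_real_derivative ln x ^ j / x ^ (b+1)) (at x)"
proof (induction j)
  case 0
  show ?case using assms
    by (auto intro!: derivative_eq_intros simp: field_simps power_add)
       (simp add: power_eq_if algebra_simps)
next
  case (Suc j)
  have "((\<lambda>x. - (ln x ^ Suc j) / (real b * x ^ b)) has_real_derivative
        (ln x ^ Suc j / x ^ (b+1) - real (Suc j) / real b * (ln x ^ j / x ^ (b+1)))) (at x)"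
    using assms
    by (auto intro!: derivative_eq_intros simp: field_simps power_add)
       (simp add: power_eq_if algebra_simps)
  from DERIV_add[OF this DERIV_cmult[OF Suc.IH, of "real (Suc j) / real b"]]
  show ?case by (simp add: algebra_simps)
qed

lemma log_moment_primitive_tendsto_0: "b > 0 \<Longrightarrow> (log_moment_primitive b j \<longlongrightarrow> 0) at_top"
proof (induction j)
  case 0 then show ?case by simp real_asymp
next
  case (Suc j)
  have "((\<lambda>x. - (ln x ^ Suc j) / (real b * x ^ b)) \<longlongrightarrow> 0) at_top"
    using Suc.prems by real_asymp
  from tendsto_add[OF this tendsto_mult_right_zero[OF Suc.IH[OF Suc.prems], of "real (Suc j) / real b"]]
  show ?case unfolding log_moment_primitive.simps by simp
qed

lemma log_moment_primitive_at_1: "b > 0 \<Longrightarrow> log_moment_primitive b j 1 = - fact j / real b ^ (j+1)"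
  by (induction j) (auto simp: field_simps)

lemma log_moment_has_integral:
  "((\<lambda>x::real. ln x ^ j / x ^ (b+2)) has_integral (fact j / real (b+1) ^ (j+1))) {1..}"
proof (rule has_integral_to_inf)
  let ?f = "\<lambda>x::real. ln x ^ j / x ^ (b+2)" and ?P = "log_moment_primitive (b+1) j"
  show "?f integrable_on {1..y}" for y
    by (rule integrable_continuous_interval, intro continuous_intros) auto
  have "(?f has_integral (?P y - ?P 1)) {1..y}" if "y \<ge> 1" for y
  proof (intro fundamental_theorem_of_calculus)
    show "1 \<le> y" by fact
    fix x assume "x \<in> {1..y}"
    then have "(?P has_real_derivative ?f x) (at x)"
      using log_moment_primitive_has_derivative[of x "b+1" j] by simp
    then show "(?P has_vector_derivative ?f x) (at x within {1..y})"
      by (simp add: has_real_derivative_iff_has_vector_derivative[symmetric] has_field_derivative_at_within)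
  qed
  then have "\<forall>\<^sub>F y in at_top. integral {1..y} ?f = ?P y - ?P 1"
    by (meson eventually_at_top_linorderI integral_unique)
  moreover have "((\<lambda>y. ?P y - ?P 1) \<longlongrightarrow> 0 - ?P 1) at_top"
    by (intro tendsto_intros log_moment_primitive_tendsto_0) simp
  ultimately show "((\<lambda>y. integral {1..y} ?f) \<longlongrightarrow> fact j / real (b+1) ^ (j+1)) at_top"
    using log_moment_primitive_at_1[of "b+1" j] by (simp add: filterlim_cong)
qed auto

lemma log_moment_sq_has_integral: "((\<lambda>x::real. ln x ^ j / x ^ 2) has_integral fact j) {1..}"
  using log_moment_has_integral[of j 0] by (simp add: power2_eq_square)

lemma inverse_sq_has_integral: "((\<lambda>x::real. 1 / x ^ 2) has_integral 1) {1..}"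
  using log_moment_sq_has_integral[of 0] by simp

section \<open>Laguerre functions\<close>

lemma sum_alternating_choose_mult_choose:
  "(\<Sum>j\<le>n. real (n choose j) * (-1)^j * real (j choose i)) = (if i = n then (-1)^n else 0)"
proof (cases "i \<le> n")
  case False
  then show ?thesis by (auto intro!: sum.neutral simp: binomial_eq_0)
next
  case True
  have "(\<Sum>j\<le>n. real (n choose j) * (-1)^j * real (j choose i)) =
        (\<Sum>j\<in>{i..n}. real (n choose j) * (-1)^j * real (j choose i))"
    by (rule sum.mono_neutral_right) (auto simp: binomial_eq_0)
  also have "\<dots> = (\<Sum>j\<in>{i..n}. real (n choose i) * ((-1)^j * real ((n - i) choose (j - i))))"
    by (rule sum.cong) (auto simp: choose_mult[symmetric] simp flip: of_nat_mult)
  also have "\<dots> = real (n choose i) * (\<Sum>l\<in>{0..n-i}. (-1)^(l+i) * real ((n - i) choose l))"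
    unfolding sum_distrib_left[symmetric]
    using True by (subst sum.atLeastAtMost_shift_0[of i n]) (auto simp: add.commute)
  also have "\<dots> = real (n choose i) * (-1)^i * (\<Sum>l\<le>n-i. (-1)^l * real ((n - i) choose l))"
    by (simp add: power_add sum_distrib_left sum_distrib_right atLeast0AtMost mult_ac)
  also have "\<dots> = (if i = n then (-1)^n else 0)"
    using True choose_alternating_sum[of "n - i", where 'a=real] by auto
  finally show ?thesis .
qed

lemma choose_add_eq_sum_choose_mult_choose:
  assumes "j \<le> n"
  shows "(j + k) choose j = (\<Sum>i\<le>n. (j choose i) * (k choose i))"
proof -
  have "(j + k) choose j = (\<Sum>i\<le>j. (j choose i) * (k choose (j - i)))"
    by (simp add: vandermonde)
  also have "\<dots> = (\<Sum>i\<le>j. (j choose (j - i)) * (k choose (j - i)))"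
    by (rule sum.cong) (auto simp: binomial_symmetric[symmetric])
  also have "\<dots> = (\<Sum>i\<le>j. (j choose i) * (k choose i))"
    by (rule sum.reindex_bij_witness[where i="\<lambda>i. j - i" and j="\<lambda>i. j - i"]) auto
  also have "\<dots> = (\<Sum>i\<le>n. (j choose i) * (k choose i))"
    using assms by (intro sum.mono_neutral_left) (auto simp: binomial_eq_0)
  finally show ?thesis .
qed

text \<open>\<open>L\<^sub>n(t) = \<Sum>\<^sub>k laguerre_coeff n k * t\<^sup>k\<close>; orthonormality of the \<open>L\<^sub>n\<close> for the weight \<open>e\<^sup>-\<^sup>t\<close>
  amounts to the following identity, because \<open>\<integral>\<^sub>0\<^sup>\<infinity> t\<^sup>j\<^sup>+\<^sup>k e\<^sup>-\<^sup>t dt = (j + k)!\<close>.\<close>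

definition laguerre_coeff :: "nat \<Rightarrow> nat \<Rightarrow> real" where
  "laguerre_coeff n k = real (n choose k) * (-1)^k / fact k"

lemma laguerre_coeff_orthonormal:
  "(\<Sum>j\<le>n. \<Sum>k\<le>m. laguerre_coeff n j * laguerre_coeff m k * fact (j + k)) = (if n = m then 1 else 0)"
proof -
  let ?A = "\<lambda>j i. real (n choose j) * (-1)^j * real (j choose i)"
  let ?B = "\<lambda>k i. real (m choose k) * (-1)^k * real (k choose i)"
  have "(\<Sum>j\<le>n. \<Sum>k\<le>m. laguerre_coeff n j * laguerre_coeff m k * fact (j + k)) =
        (\<Sum>j\<le>n. \<Sum>k\<le>m. \<Sum>i\<le>n. ?A j i * ?B k i)"
  proof (intro sum.cong refl)
    fix j k assume "j \<in> {..n}" "k \<in> {..m}"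
    then have "fact (j + k) = (fact j * fact k) * real ((j + k) choose j)"
      by (simp add: binomial_fact field_simps)
    also have "\<dots> = (fact j * fact k) * (\<Sum>i\<le>n. real (j choose i) * real (k choose i))"
      using \<open>j \<in> _\<close> by (simp add: choose_add_eq_sum_choose_mult_choose[of j n])
    finally show "laguerre_coeff n j * laguerre_coeff m k * fact (j + k) = (\<Sum>i\<le>n. ?A j i * ?B k i)"
      by (simp add: laguerre_coeff_def sum_distrib_left field_simps)
  qed
  also have "\<dots> = (\<Sum>i\<le>n. (\<Sum>j\<le>n. ?A j i) * (\<Sum>k\<le>m. ?B k i))"
  proof -
    have "(\<Sum>j\<le>n. \<Sum>k\<le>m. \<Sum>i\<le>n. ?A j i * ?B k i) = (\<Sum>i\<le>n. \<Sum>j\<le>n. \<Sum>k\<le>m. ?A j i * ?B k i)"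
      by (subst sum.swap) (simp only: sum.swap[of _ "{..m}"])
    then show ?thesis by (simp only: sum_product)
  qed
  also have "\<dots> = (\<Sum>i\<le>n. (if i = n then (-1)^n else 0) * (if i = m then (-1)^m else 0))"
    by (simp add: sum_alternating_choose_mult_choose)
  also have "\<dots> = (\<Sum>i\<le>n. if i = n \<and> n = m then 1 else 0)"
    by (rule sum.cong) (auto simp flip: power_add)
  finally show ?thesis by simp
qed

definition laguerre_fun :: "nat \<Rightarrow> real \<Rightarrow> real" where
  "laguerre_fun n x = (\<Sum>k\<le>n. laguerre_coeff n k * ln x ^ k) / x"

lemma laguerre_fun_measurable: "laguerre_fun n \<in> borel_measurable (lebesgue_on {1..})"
  unfolding laguerre_fun_def
  by (intro continuous_imp_measurable_on_sets_lebesgue continuous_intros) auto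

lemma laguerre_fun_orthonormal:
  "((\<lambda>x. laguerre_fun n x * laguerre_fun m x) has_integral (if n = m then 1 else 0)) {1..}"
proof -
  have eq: "laguerre_fun n x * laguerre_fun m x =
      (\<Sum>j\<le>n. \<Sum>k\<le>m. laguerre_coeff n j * laguerre_coeff m k * (ln x ^ (j+k) / x ^ 2))" for x
  proof -
    have "laguerre_fun n x * laguerre_fun m x =
        (\<Sum>j\<le>n. \<Sum>k\<le>m. laguerre_coeff n j * ln x ^ j * (laguerre_coeff m k * ln x ^ k)) / x^2"
      by (simp add: laguerre_fun_def power2_eq_square sum_product)
    then show ?thesis
      by (simp add: sum_divide_distrib power_add mult_ac)
  qed
  have "((\<lambda>x. \<Sum>j\<le>n. \<Sum>k\<le>m. laguerre_coeff n j * laguerre_coeff m k * (ln x ^ (j+k) / x ^ 2))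
          has_integral (\<Sum>j\<le>n. \<Sum>k\<le>m. laguerre_coeff n j * laguerre_coeff m k * fact (j+k))) {1..}"
    by (intro has_integral_sum has_integral_mult_right log_moment_sq_has_integral) auto
  then show ?thesis
    unfolding eq laguerre_coeff_orthonormal .
qed

lemma laguerre_fun_div_dominated:
  obtains h where "h integrable_on {1..}" "\<And>x. x \<ge> 1 \<Longrightarrow> \<bar>laguerre_fun n x\<bar> / x \<le> h x"
proof
  show "(\<lambda>x. \<Sum>k\<le>n. \<bar>laguerre_coeff n k\<bar> * (ln x ^ k / x ^ 2)) integrable_on {1..}"
    by (intro integrable_sum integrable_on_mult_right has_integral_integrable[OF log_moment_sq_has_integral]) auto
  fix x :: real assume x: "x \<ge> 1"
  have "\<bar>laguerre_fun n x\<bar> / x = \<bar>\<Sum>k\<le>n. laguerre_coeff n k * ln x ^ k\<bar> / x^2"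
    using x by (simp add: laguerre_fun_def power2_eq_square abs_divide)
  also have "\<dots> \<le> (\<Sum>k\<le>n. \<bar>laguerre_coeff n k * ln x ^ k\<bar>) / x^2"
    by (intro divide_right_mono sum_abs) auto
  also have "\<dots> = (\<Sum>k\<le>n. \<bar>laguerre_coeff n k\<bar> * (ln x ^ k / x ^ 2))"
    using x by (simp add: sum_divide_distrib abs_mult)
  finally show "\<bar>laguerre_fun n x\<bar> / x \<le> (\<Sum>k\<le>n. \<bar>laguerre_coeff n k\<bar> * (ln x ^ k / x ^ 2))" .
qed

section \<open>Bessel's inequality and Parseval's identity for functions of order \<open>1/x\<close>\<close>

definition inv_bounded :: "(real \<Rightarrow> real) \<Rightarrow> bool" where
  "inv_bounded g \<longleftrightarrow> g \<in> borel_measurable (lebesgue_on {1..}) \<and> (\<exists>C. \<forall>x\<ge>1. \<bar>g x\<bar> \<le> C / x)"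

lemma inv_boundedE:
  assumes "inv_bounded g"
  obtains C where "g \<in> borel_measurable (lebesgue_on {1..})" "\<And>x. x \<ge> 1 \<Longrightarrow> \<bar>g x\<bar> \<le> \<bar>C\<bar> / x"
proof -
  from assms obtain C where "g \<in> borel_measurable (lebesgue_on {1..})" "\<forall>x\<ge>1. \<bar>g x\<bar> \<le> C / x"
    by (auto simp: inv_bounded_def)
  moreover have "C / x \<le> \<bar>C\<bar> / x" if "x \<ge> 1" for x
    using that by (intro divide_right_mono) auto
  ultimately show ?thesis using that by (meson order_trans)
qed

lemma inv_bounded_diff: "inv_bounded f \<Longrightarrow> inv_bounded g \<Longrightarrow> inv_bounded (\<lambda>x. f x - g x)"
proof -
  assume "inv_bounded f" "inv_bounded g"
  then obtain C D where f: "f \<in> borel_measurable (lebesgue_on {1..})" "\<And>x. x \<ge> 1 \<Longrightarrow> \<bar>f x\<bar> \<le> \<bar>C\<bar> / x"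
    and g: "g \<in> borel_measurable (lebesgue_on {1..})" "\<And>x. x \<ge> 1 \<Longrightarrow> \<bar>g x\<bar> \<le> \<bar>D\<bar> / x"
    by (metis inv_boundedE)
  have "\<bar>f x - g x\<bar> \<le> (\<bar>C\<bar> + \<bar>D\<bar>) / x" if "x \<ge> 1" for x
    using f(2)[OF that] g(2)[OF that] by (simp add: add_divide_distrib)
  moreover have "(\<lambda>x. f x - g x) \<in> borel_measurable (lebesgue_on {1..})"
    using f(1) g(1) by measurable
  ultimately show ?thesis
    unfolding inv_bounded_def by blast
qed

lemma integrable_inv_bounded_mult_laguerre_fun:
  assumes "inv_bounded g"
  shows "(\<lambda>x. g x * laguerre_fun n x) integrable_on {1..}"
proof -
  obtain C where g: "g \<in> borel_measurable (lebesgue_on {1..})" "\<And>x. x \<ge> 1 \<Longrightarrow> \<bar>g x\<bar> \<le> \<bar>C\<bar> / x"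
    using inv_boundedE[OF assms] by blast
  obtain h where h: "h integrable_on {1..}" "\<And>x. x \<ge> 1 \<Longrightarrow> \<bar>laguerre_fun n x\<bar> / x \<le> h x"
    using laguerre_fun_div_dominated[of n] by blast
  show ?thesis
  proof (rule measurable_bounded_by_integrable_imp_integrable)
    show "(\<lambda>x. g x * laguerre_fun n x) \<in> borel_measurable (lebesgue_on {1..})"
      using g(1) laguerre_fun_measurable by measurable
    show "(\<lambda>x. \<bar>C\<bar> * h x) integrable_on {1..}"
      using h(1) by (rule integrable_on_mult_right)
    fix x :: real assume x: "x \<in> {1..}"
    have "norm (g x * laguerre_fun n x) \<le> \<bar>C\<bar> / x * \<bar>laguerre_fun n x\<bar>"
      unfolding real_norm_def abs_mult using g(2) x by (intro mult_right_mono) auto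
    also have "\<dots> = \<bar>C\<bar> * (\<bar>laguerre_fun n x\<bar> / x)" by simp
    also have "\<dots> \<le> \<bar>C\<bar> * h x"
      using h(2) x by (intro mult_left_mono) auto
    finally show "norm (g x * laguerre_fun n x) \<le> \<bar>C\<bar> * h x" .
  qed auto
qed

lemma integrable_inv_bounded_sq:
  assumes "inv_bounded g"
  shows "(\<lambda>x. g x ^ 2) integrable_on {1..}"
proof -
  obtain C where g: "g \<in> borel_measurable (lebesgue_on {1..})" "\<And>x. x \<ge> 1 \<Longrightarrow> \<bar>g x\<bar> \<le> \<bar>C\<bar> / x"
    using inv_boundedE[OF assms] by blast
  show ?thesis
  proof (rule measurable_bounded_by_integrable_imp_integrable)
    show "(\<lambda>x. g x ^ 2) \<in> borel_measurable (lebesgue_on {1..})"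
      using g(1) by measurable
    show "(\<lambda>x. C^2 * (1 / x ^ 2)) integrable_on {1..}"
      by (intro integrable_on_mult_right has_integral_integrable[OF inverse_sq_has_integral])
    fix x :: real assume "x \<in> {1..}"
    then have "\<bar>g x\<bar>^2 \<le> (\<bar>C\<bar> / x)^2" using g(2) by (intro power_mono) auto
    then show "norm (g x ^ 2) \<le> C^2 * (1 / x ^ 2)"
      by (simp add: power_divide)
  qed auto
qed

definition laguerre_fourier :: "(real \<Rightarrow> real) \<Rightarrow> nat \<Rightarrow> real" where
  "laguerre_fourier g n = integral {1..} (\<lambda>x. g x * laguerre_fun n x)"

definition bessel_defect :: "(real \<Rightarrow> real) \<Rightarrow> nat \<Rightarrow> real" where
  "bessel_defect g N = integral {1..} (\<lambda>x. g x^2) - (\<Sum>n<N. laguerre_fourier g n ^ 2)"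

definition laguerre_remainder :: "(real \<Rightarrow> real) \<Rightarrow> nat \<Rightarrow> real \<Rightarrow> real" where
  "laguerre_remainder g N x = g x - (\<Sum>n<N. laguerre_fourier g n * laguerre_fun n x)"

lemma laguerre_remainder_sq_has_integral:
  assumes "inv_bounded g"
  shows "((\<lambda>x. laguerre_remainder g N x ^ 2) has_integral bessel_defect g N) {1..}"
proof -
  let ?c = "laguerre_fourier g"
  have eq: "laguerre_remainder g N x ^ 2 = g x ^ 2 - 2 * (\<Sum>n<N. ?c n * (g x * laguerre_fun n x))
      + (\<Sum>n<N. \<Sum>m<N. ?c n * ?c m * (laguerre_fun n x * laguerre_fun m x))" for x
    by (simp add: laguerre_remainder_def power2_eq_square algebra_simps
                  sum_distrib_left sum_distrib_right sum_product)
  have sq: "((\<lambda>x. g x ^ 2) has_integral integral {1..} (\<lambda>x. g x^2)) {1..}"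
    using integrable_inv_bounded_sq[OF assms] by (simp add: integrable_integral)
  have mixed: "((\<lambda>x. \<Sum>n<N. ?c n * (g x * laguerre_fun n x)) has_integral (\<Sum>n<N. ?c n * ?c n)) {1..}"
    by (intro has_integral_sum has_integral_mult_right)
       (auto simp: laguerre_fourier_def intro!: integrable_integral integrable_inv_bounded_mult_laguerre_fun assms)
  have "((\<lambda>x. \<Sum>n<N. \<Sum>m<N. ?c n * ?c m * (laguerre_fun n x * laguerre_fun m x)) has_integral
             (\<Sum>n<N. \<Sum>m<N. ?c n * ?c m * (if n = m then 1 else 0))) {1..}"
    by (intro has_integral_sum has_integral_mult_right laguerre_fun_orthonormal) auto
  also have "(\<Sum>n<N. \<Sum>m<N. ?c n * ?c m * (if n = m then 1 else 0)) = (\<Sum>n<N. ?c n ^ 2)"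
    by (simp add: if_distrib power2_eq_square cong: if_cong)
  finally have diag: "((\<lambda>x. \<Sum>n<N. \<Sum>m<N. ?c n * ?c m * (laguerre_fun n x * laguerre_fun m x))
                       has_integral (\<Sum>n<N. ?c n ^ 2)) {1..}" .
  show ?thesis
    using has_integral_add[OF has_integral_diff[OF sq has_integral_mult_right[OF mixed, of 2]] diag]
    unfolding eq bessel_defect_def by (simp add: power2_eq_square)
qed

lemma bessel_inequality: "inv_bounded g \<Longrightarrow> 0 \<le> bessel_defect g N"
  using has_integral_nonneg[OF laguerre_remainder_sq_has_integral] by fastforce

definition inv_poly :: "(nat \<Rightarrow> real) \<Rightarrow> nat \<Rightarrow> real \<Rightarrow> real" where
  "inv_poly a M x = (\<Sum>i\<le>M. a i / x ^ (i+1))"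

lemma inv_bounded_inv_poly: "inv_bounded (inv_poly a M)"
  unfolding inv_bounded_def
proof
  show "inv_poly a M \<in> borel_measurable (lebesgue_on {1..})"
    unfolding inv_poly_def
    by (intro continuous_imp_measurable_on_sets_lebesgue continuous_intros) auto
  show "\<exists>C. \<forall>x\<ge>1. \<bar>inv_poly a M x\<bar> \<le> C / x"
  proof (intro exI allI impI)
    fix x :: real assume x: "x \<ge> 1"
    have "\<bar>inv_poly a M x\<bar> \<le> (\<Sum>i\<le>M. \<bar>a i / x ^ (i+1)\<bar>)"
      unfolding inv_poly_def by (rule sum_abs)
    also have "\<dots> \<le> (\<Sum>i\<le>M. \<bar>a i\<bar> / x)"
    proof (intro sum_mono)
      fix i
      have "x \<le> x ^ (i+1)" using x by (simp add: self_le_power)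
      then show "\<bar>a i / x ^ (i+1)\<bar> \<le> \<bar>a i\<bar> / x"
        using x by (simp add: abs_divide divide_left_mono)
    qed
    also have "\<dots> = (\<Sum>i\<le>M. \<bar>a i\<bar>) / x" by (simp add: sum_divide_distrib)
    finally show "\<bar>inv_poly a M x\<bar> \<le> (\<Sum>i\<le>M. \<bar>a i\<bar>) / x" .
  qed
qed

lemma laguerre_fourier_inv_power:
  "((\<lambda>x. laguerre_fun n x / x ^ (i+1)) has_integral (real i ^ n / real (i+1) ^ (n+1))) {1..}"
proof -
  have eq: "laguerre_fun n x / x ^ (i+1) = (\<Sum>k\<le>n. laguerre_coeff n k * (ln x ^ k / x ^ (i+2)))" for x :: real
    by (simp add: laguerre_fun_def sum_divide_distrib field_simps)
  have "((\<lambda>x. \<Sum>k\<le>n. laguerre_coeff n k * (ln x ^ k / x ^ (i+2))) has_integral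
          (\<Sum>k\<le>n. laguerre_coeff n k * (fact k / real (i+1) ^ (k+1)))) {1..}"
    by (intro has_integral_sum has_integral_mult_right log_moment_has_integral) auto
  also have "(\<Sum>k\<le>n. laguerre_coeff n k * (fact k / real (i+1) ^ (k+1))) =
      (\<Sum>k\<le>n. real (n choose k) * (-1 / real (i+1))^k * 1 ^ (n-k)) / real (i+1)"
    unfolding sum_divide_distrib
  proof (rule sum.cong[OF refl])
    fix k
    have "(-1 / real (i+1)) ^ k = (-1)^k / real (i+1) ^ k" by (simp only: power_divide)
    then show "laguerre_coeff n k * (fact k / real (i+1) ^ (k+1)) =
      real (n choose k) * (-1 / real (i+1))^k * 1 ^ (n-k) / real (i+1)"
      by (simp add: laguerre_coeff_def)
  qed
  also have "\<dots> = (1 - 1 / real (i+1)) ^ n / real (i+1)"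
    by (subst binomial_ring[symmetric]) simp
  also have "\<dots> = real i ^ n / real (i+1) ^ (n+1)"
    by (simp add: field_simps power_divide)
  finally show ?thesis unfolding eq .
qed

lemma laguerre_fourier_inv_poly:
  "laguerre_fourier (inv_poly a M) n = (\<Sum>i\<le>M. a i * (real i ^ n / real (i+1) ^ (n+1)))"
proof -
  have "inv_poly a M x * laguerre_fun n x = (\<Sum>i\<le>M. a i * (laguerre_fun n x / x ^ (i+1)))" for x
    by (simp add: inv_poly_def sum_distrib_right)
  then have "((\<lambda>x. inv_poly a M x * laguerre_fun n x) has_integral
               (\<Sum>i\<le>M. a i * (real i ^ n / real (i+1) ^ (n+1)))) {1..}"
    by (simp only:) (intro has_integral_sum has_integral_mult_right laguerre_fourier_inv_power; simp)
  then show ?thesis by (simp add: laguerre_fourier_def integral_unique)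
qed

lemma inv_poly_sq_has_integral:
  "((\<lambda>x. inv_poly a M x ^ 2) has_integral (\<Sum>i\<le>M. \<Sum>k\<le>M. a i * a k / real (i+k+1))) {1..}"
proof -
  have eq: "inv_poly a M x ^ 2 = (\<Sum>i\<le>M. \<Sum>k\<le>M. a i * a k * (ln x ^ 0 / x ^ ((i+k)+2)))" for x :: real
    by (simp add: inv_poly_def power2_eq_square sum_product power_add field_simps)
  have "((\<lambda>x. \<Sum>i\<le>M. \<Sum>k\<le>M. a i * a k * (ln x ^ 0 / x ^ ((i+k)+2))) has_integral
         (\<Sum>i\<le>M. \<Sum>k\<le>M. a i * a k * (fact 0 / real ((i+k)+1) ^ (0+1)))) {1..}"
    by (intro has_integral_sum has_integral_mult_right log_moment_has_integral) auto
  then show ?thesis unfolding eq by simp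
qed

lemma inv_power_fourier_products_sums:
  "(\<lambda>n. (real i ^ n / real (i+1) ^ (n+1)) * (real k ^ n / real (k+1) ^ (n+1))) sums (1 / real (i+k+1))"
proof -
  define c where "c = 1 / (real (i+1) * real (k+1))"
  define r where "r = real i * real k / (real (i+1) * real (k+1))"
  have "real i * real k < real (i+1) * real (k+1)" by (simp add: algebra_simps)
  then have r: "\<bar>r\<bar> < 1" unfolding r_def by (simp add: abs_of_nonneg divide_less_eq)
  have "(\<lambda>n. c * r ^ n) sums (c * (1 / (1 - r)))"
    using r by (intro sums_mult geometric_sums) simp
  moreover have "c * r ^ n = (real i ^ n / real (i+1) ^ (n+1)) * (real k ^ n / real (k+1) ^ (n+1))" for n
  proof -
    have "r ^ n = (real i ^ n * real k ^ n) / (real (i+1) ^ n * real (k+1) ^ n)"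
      unfolding r_def by (simp only: power_divide power_mult_distrib)
    then show ?thesis
      unfolding c_def by (simp only: power_Suc times_divide_times_eq) (simp add: mult_ac)
  qed
  moreover have "1 - r = real (i+k+1) / (real (i+1) * real (k+1))"
    unfolding r_def by (simp add: eq_divide_eq left_diff_distrib del: of_nat_add) (simp add: algebra_simps)
  then have "c * (1 / (1 - r)) = 1 / real (i+k+1)"
    by (simp add: c_def)
  ultimately show ?thesis by simp
qed

lemma parseval_inv_poly:
  "(\<lambda>n. laguerre_fourier (inv_poly a M) n ^ 2) sums integral {1..} (\<lambda>x. inv_poly a M x ^ 2)"
proof -
  let ?e = "\<lambda>n i. real i ^ n / real (i+1) ^ (n+1)"
  have "(\<lambda>n. \<Sum>i\<le>M. \<Sum>k\<le>M. a i * a k * (?e n i * ?e n k)) sums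
          (\<Sum>i\<le>M. \<Sum>k\<le>M. a i * a k * (1 / real (i+k+1)))"
    by (intro sums_sum sums_mult inv_power_fourier_products_sums)
  moreover have "(\<lambda>n. \<Sum>i\<le>M. \<Sum>k\<le>M. a i * a k * (?e n i * ?e n k)) =
                 (\<lambda>n. laguerre_fourier (inv_poly a M) n ^ 2)"
    by (simp add: laguerre_fourier_inv_poly power2_eq_square sum_product mult_ac)
  ultimately show ?thesis using inv_poly_sq_has_integral[of a M] by (simp add: integral_unique)
qed

lemma laguerre_fourier_diff:
  "inv_bounded f \<Longrightarrow> inv_bounded g \<Longrightarrow>
     laguerre_fourier (\<lambda>x. f x - g x) n = laguerre_fourier f n - laguerre_fourier g n"
  unfolding laguerre_fourier_def
  by (simp add: left_diff_distrib integral_diff integrable_inv_bounded_mult_laguerre_fun)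

lemma sq_add_le: "(a + b)^2 \<le> 2 * a^2 + 2 * (b::real)^2"
  using sum_squares_ge_zero[of "a - b" 0] by (simp add: power2_eq_square algebra_simps)

lemma bessel_defect_le:
  assumes F: "inv_bounded F" and P: "inv_bounded P"
  shows "bessel_defect F N \<le> 2 * bessel_defect P N + 2 * integral {1..} (\<lambda>x. (F x - P x)^2)"
proof -
  define G where "G = (\<lambda>x. F x - P x)"
  have G: "inv_bounded G" unfolding G_def by (intro inv_bounded_diff F P)
  have "bessel_defect F N \<le> 2 * bessel_defect P N + 2 * bessel_defect G N"
  proof (rule has_integral_le[OF laguerre_remainder_sq_has_integral[OF F]
        has_integral_add[OF has_integral_mult_right[OF laguerre_remainder_sq_has_integral[OF P]]
                            has_integral_mult_right[OF laguerre_remainder_sq_has_integral[OF G]]]])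
    fix x :: real
    have "laguerre_remainder F N x = laguerre_remainder P N x + laguerre_remainder G N x"
      using F P by (simp add: G_def laguerre_remainder_def laguerre_fourier_diff
                              left_diff_distrib sum_subtractf)
    then show "laguerre_remainder F N x ^ 2 \<le>
               2 * laguerre_remainder P N x ^ 2 + 2 * laguerre_remainder G N x ^ 2"
      by (simp add: sq_add_le)
  qed
  moreover have "bessel_defect G N \<le> integral {1..} (\<lambda>x. G x^2)"
    by (simp add: bessel_defect_def sum_nonneg)
  ultimately show ?thesis by (simp add: G_def)
qed

lemma parseval_of_inv_poly_approximable:
  assumes F: "inv_bounded F"
    and approx: "\<And>e. e > 0 \<Longrightarrow> \<exists>a M. integral {1..} (\<lambda>x. (F x - inv_poly a M x)^2) < e"
  shows "(\<lambda>n. laguerre_fourier F n ^ 2) sums integral {1..} (\<lambda>x. F x^2)"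
proof -
  have "bessel_defect F \<longlonglongrightarrow> 0"
  proof (rule LIMSEQ_I)
    fix e :: real assume e: "e > 0"
    obtain a M where aM: "integral {1..} (\<lambda>x. (F x - inv_poly a M x)^2) < e / 4"
      using approx[of "e/4"] e by auto
    have "bessel_defect (inv_poly a M) \<longlonglongrightarrow> 0"
      using tendsto_diff[OF tendsto_const[of "integral {1..} (\<lambda>x. inv_poly a M x ^ 2)"]
                                parseval_inv_poly[of a M, unfolded sums_def]]
      by (simp add: bessel_defect_def[abs_def])
    then obtain N0 where N0: "\<And>N. N \<ge> N0 \<Longrightarrow> \<bar>bessel_defect (inv_poly a M) N\<bar> < e / 4"
      using LIMSEQ_D[of _ 0 "e/4"] e by fastforce
    have "\<bar>bessel_defect F N\<bar> < e" if "N \<ge> N0" for N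
      using bessel_defect_le[OF F inv_bounded_inv_poly, of N a M] bessel_inequality[OF F, of N]
            N0[OF that] aM abs_ge_self[of "bessel_defect (inv_poly a M) N"]
      by linarith
    then show "\<exists>N0. \<forall>N\<ge>N0. norm (bessel_defect F N - 0) < e" by auto
  qed
  from tendsto_diff[OF tendsto_const[of "integral {1..} (\<lambda>x. F x^2)"] this] show ?thesis
    by (simp add: sums_def bessel_defect_def)
qed

section \<open>Approximating \<open>{x}/x\<close> by polynomials in \<open>1/x\<close>\<close>

lemma borel_measurable_id_lebesgue_on [measurable]:
  "(\<lambda>x::real. x) \<in> borel_measurable (lebesgue_on S)"
  using id_borel_measurable_lebesgue_on unfolding id_def .

lemma borel_measurable_frac_lebesgue_on [measurable]:
  "(frac :: real \<Rightarrow> real) \<in> borel_measurable (lebesgue_on S)"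
proof -
  have "(\<lambda>x::real. x - real_of_int \<lfloor>x\<rfloor>) \<in> borel_measurable borel"
    by (intro borel_measurable_diff borel_measurable_real_floor) simp
  from measurable_compose[OF borel_measurable_id_lebesgue_on[of S] this]
  show ?thesis by (simp add: frac_def[abs_def])
qed

definition frac_over_x :: "real \<Rightarrow> real" where
  "frac_over_x x = frac x / x"

lemma frac_over_x_bounds: "x \<ge> 1 \<Longrightarrow> 0 \<le> frac_over_x x \<and> frac_over_x x \<le> 1 / x"
  using frac_lt_1[of x] by (auto simp: frac_over_x_def divide_right_mono less_imp_le)

lemma inv_bounded_frac_over_x: "inv_bounded frac_over_x"
  unfolding inv_bounded_def
proof
  show "frac_over_x \<in> borel_measurable (lebesgue_on {1..})"
    unfolding frac_over_x_def by measurable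
  show "\<exists>C. \<forall>x\<ge>1. \<bar>frac_over_x x\<bar> \<le> C / x"
    using frac_over_x_bounds by (intro exI[of _ 1]) force
qed

definition frac_cutoff :: "nat \<Rightarrow> real \<Rightarrow> real" where
  "frac_cutoff m x = min (frac x) (real m * (1 - frac x))"

lemma frac_cutoff_nonneg: "frac_cutoff m x \<ge> 0"
  by (simp add: frac_cutoff_def frac_lt_1 less_imp_le)

lemma frac_cutoff_le_frac: "frac_cutoff m x \<le> frac x"
  by (simp add: frac_cutoff_def)

lemma frac_cutoff_le_1: "frac_cutoff m x \<le> 1"
  using frac_cutoff_le_frac[of m x] frac_lt_1[of x] by linarith

lemma frac_cutoff_near_integer:
  assumes "x \<in> \<int>" "dist y x < 1"
  shows "frac_cutoff m y \<le> (real m + 1) * \<bar>y - x\<bar>"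
proof -
  obtain k where k: "x = of_int k" using assms(1) by (auto elim: Ints_cases)
  show ?thesis
  proof (cases "y \<ge> x")
    case True
    with assms(2) k have "floor y = k" by (auto simp: floor_eq_iff dist_real_def)
    then have "frac y = y - x" using k by (simp add: frac_def)
    then have "frac_cutoff m y \<le> y - x" using frac_cutoff_le_frac[of m y] by simp
    also have "\<dots> \<le> (real m + 1) * (y - x)"
      using True mult_nonneg_nonneg[of "real m" "y - x"] by (simp add: algebra_simps)
    finally show ?thesis using True by simp
  next
    case False
    with assms(2) k have "floor y = k - 1" by (auto simp: floor_eq_iff dist_real_def)
    then have "1 - frac y = x - y" using k by (simp add: frac_def)
    then have "frac_cutoff m y \<le> real m * (x - y)" by (simp add: frac_cutoff_def)
    also have "\<dots> \<le> (real m + 1) * \<bar>y - x\<bar>" using False by (intro mult_mono) auto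
    finally show ?thesis .
  qed
qed

lemma isCont_frac_cutoff: "isCont (frac_cutoff m) x"
proof (cases "x \<in> \<int>")
  case False
  then show ?thesis unfolding frac_cutoff_def
    by (intro continuous_intros continuous_frac)
next
  case True
  then have "frac x = 0" by simp
  then have "frac_cutoff m x = 0" by (simp add: frac_cutoff_def del: frac_eq_0_iff)
  have "(frac_cutoff m \<longlongrightarrow> 0) (at x)"
  proof (rule tendsto_sandwich[where f="\<lambda>_. 0" and h="\<lambda>y. (real m + 1) * \<bar>y - x\<bar>"])
    show "\<forall>\<^sub>F y in at x. 0 \<le> frac_cutoff m y" by (simp add: frac_cutoff_nonneg)
    show "\<forall>\<^sub>F y in at x. frac_cutoff m y \<le> (real m + 1) * \<bar>y - x\<bar>"
      using frac_cutoff_near_integer[OF True] by (auto simp: eventually_at intro!: exI[of _ 1])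
    show "((\<lambda>y. (real m + 1) * \<bar>y - x\<bar>) \<longlongrightarrow> 0) (at x)"
      by (rule tendsto_eq_intros refl | simp)+
  qed simp
  then show ?thesis using \<open>frac_cutoff m x = 0\<close> by (simp add: isCont_def)
qed

text \<open>The factor \<open>min 1 (m y)\<close> tames the oscillation of \<open>frac_cutoff m (1/y)\<close> as \<open>y \<rightarrow> 0\<close>.\<close>

definition frac_cutoff_recip :: "nat \<Rightarrow> real \<Rightarrow> real" where
  "frac_cutoff_recip m y = min 1 (real m * y) * frac_cutoff m (1 / y)"

lemma continuous_on_frac_cutoff_recip: "continuous_on S (frac_cutoff_recip m)"
proof (intro continuous_at_imp_continuous_on ballI)
  fix y show "isCont (frac_cutoff_recip m) y"
  proof (cases "y = 0")
    case False
    then show ?thesis unfolding frac_cutoff_recip_def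
      by (intro continuous_intros isCont_o2[OF _ isCont_frac_cutoff]) auto
  next
    case True
    have bound: "\<bar>frac_cutoff_recip m z\<bar> \<le> real m * \<bar>z\<bar>" for z
    proof -
      have "\<bar>frac_cutoff_recip m z\<bar> = \<bar>min 1 (real m * z)\<bar> * frac_cutoff m (1/z)"
        by (simp add: frac_cutoff_recip_def abs_mult frac_cutoff_nonneg)
      also have "\<dots> \<le> \<bar>real m * z\<bar> * 1"
        by (intro mult_mono frac_cutoff_le_1) (auto simp: frac_cutoff_nonneg abs_le_iff)
      finally show ?thesis by (simp add: abs_mult)
    qed
    have "(frac_cutoff_recip m \<longlongrightarrow> 0) (at 0)"
    proof (rule tendsto_sandwich[where f="\<lambda>z. - (real m * \<bar>z\<bar>)" and h="\<lambda>z. real m * \<bar>z\<bar>"])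
      show "\<forall>\<^sub>F z in at 0. - (real m * \<bar>z\<bar>) \<le> frac_cutoff_recip m z"
           "\<forall>\<^sub>F z in at 0. frac_cutoff_recip m z \<le> real m * \<bar>z\<bar>"
        using bound by (auto intro!: always_eventually) (metis abs_le_iff minus_le_iff)+
      show "((\<lambda>z. - (real m * \<bar>z\<bar>)) \<longlongrightarrow> 0) (at 0)" "((\<lambda>z. real m * \<bar>z\<bar>) \<longlongrightarrow> 0) (at 0)"
        by (rule tendsto_eq_intros refl | simp)+
    qed
    then show ?thesis using True by (simp add: isCont_def frac_cutoff_recip_def)
  qed
qed

lemma inv_bounded_comp_inverse:
  assumes g: "continuous_on {0..1} g"
  shows "inv_bounded (\<lambda>x. g (1 / x) / x)"
  unfolding inv_bounded_def
proof
  have "continuous_on {1..} (\<lambda>x. g (1 / x) / x)"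
    by (intro continuous_intros continuous_on_compose2[OF g]) auto
  then show "(\<lambda>x. g (1 / x) / x) \<in> borel_measurable (lebesgue_on {1..})"
    by (intro continuous_imp_measurable_on_sets_lebesgue) auto
  obtain B where B: "\<And>y. y \<in> {0..1} \<Longrightarrow> \<bar>g y\<bar> \<le> B"
    using compact_imp_bounded[OF compact_continuous_image[OF g compact_Icc]]
    by (force simp: bounded_iff)
  have "\<bar>g (1 / x) / x\<bar> \<le> B / x" if "x \<ge> 1" for x
    using B[of "1 / x"] that by (simp add: abs_divide divide_right_mono)
  then show "\<exists>C. \<forall>x\<ge>1. \<bar>g (1 / x) / x\<bar> \<le> C / x" by blast
qed

definition frac_approx :: "nat \<Rightarrow> real \<Rightarrow> real" where
  "frac_approx m x = frac_cutoff_recip m (1 / x) / x"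

lemma frac_cutoff_recip_inverse:
  "x \<ge> 1 \<Longrightarrow> frac_cutoff_recip m (1 / x) = min 1 (real m / x) * frac_cutoff m x"
  by (simp add: frac_cutoff_recip_def)

lemma frac_approx_bounds: "x \<ge> 1 \<Longrightarrow> 0 \<le> frac_approx m x \<and> frac_approx m x \<le> 1 / x"
proof -
  assume x: "x \<ge> 1"
  have "0 \<le> frac_cutoff_recip m (1 / x) \<and> frac_cutoff_recip m (1 / x) \<le> 1"
    using frac_cutoff_nonneg[of m x] frac_cutoff_le_1[of m x] x
    by (auto simp: frac_cutoff_recip_inverse intro!: mult_nonneg_nonneg mult_le_one)
  then show ?thesis
    using x by (auto simp: frac_approx_def divide_right_mono)
qed

lemma inv_bounded_frac_approx: "inv_bounded (frac_approx m)"
  unfolding frac_approx_def[abs_def]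
  by (intro inv_bounded_comp_inverse continuous_on_frac_cutoff_recip)

lemma frac_approx_tendsto: "x \<ge> 1 \<Longrightarrow> (\<lambda>m. frac_approx m x) \<longlonglongrightarrow> frac_over_x x"
proof -
  assume x: "x \<ge> 1"
  have "frac x < 1" by (rule frac_lt_1)
  obtain N :: nat where N: "real N > x + 1 / (1 - frac x)" using reals_Archimedean2 by blast
  have "frac_approx m x = frac_over_x x" if "m \<ge> N" for m
  proof -
    have m: "real m > x + 1 / (1 - frac x)" using N that by (smt (verit) of_nat_le_iff)
    have "1 / (1 - frac x) \<ge> 0" using \<open>frac x < 1\<close> by simp
    then have "real m \<ge> x" using m by linarith
    then have "min 1 (real m / x) = 1" using x by simp
    have "real m * (1 - frac x) \<ge> (1 / (1 - frac x)) * (1 - frac x)"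
      using m x \<open>frac x < 1\<close> by (intro mult_right_mono) auto
    then have "frac_cutoff m x = frac x"
      unfolding frac_cutoff_def using \<open>frac x < 1\<close> by simp
    with \<open>min 1 (real m / x) = 1\<close> show ?thesis
      using x by (simp add: frac_approx_def frac_cutoff_recip_inverse frac_over_x_def)
  qed
  then show ?thesis
    by (intro tendsto_eventually) (auto simp: eventually_at_top_linorder)
qed

lemma frac_approx_sq_dist_tendsto_0:
  "(\<lambda>m. integral {1..} (\<lambda>x. (frac_over_x x - frac_approx m x)^2)) \<longlonglongrightarrow> 0"
proof -
  have "(\<lambda>m. integral {1..} (\<lambda>x. (frac_over_x x - frac_approx m x)^2)) \<longlonglongrightarrow> integral {1..} (\<lambda>x::real. 0)"
  proof (rule Equivalence_Lebesgue_Henstock_Integration.dominated_convergence(2)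
           [where h="\<lambda>x. 1/x^2" and g="\<lambda>x. 0"])
    show "(\<lambda>x. (frac_over_x x - frac_approx m x)^2) integrable_on {1..}" for m
      by (intro integrable_inv_bounded_sq inv_bounded_diff inv_bounded_frac_over_x inv_bounded_frac_approx)
    show "(\<lambda>x::real. 1 / x^2) integrable_on {1..}" using inverse_sq_has_integral by blast
    fix m and x :: real assume "x \<in> {1..}"
    then have "\<bar>frac_over_x x - frac_approx m x\<bar> \<le> 1 / x"
      using frac_over_x_bounds[of x] frac_approx_bounds[of x m] by auto
    then have "\<bar>frac_over_x x - frac_approx m x\<bar>^2 \<le> (1 / x)^2" by (intro power_mono) auto
    then show "norm ((frac_over_x x - frac_approx m x)^2) \<le> 1 / x^2" by (simp add: power_divide)
  next
    fix x :: real assume "x \<in> {1..}"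
    then show "(\<lambda>m. (frac_over_x x - frac_approx m x)^2) \<longlonglongrightarrow> 0"
      using tendsto_power[OF tendsto_diff[OF tendsto_const frac_approx_tendsto], of x "frac_over_x x" 2]
      by simp
  qed
  then show ?thesis by simp
qed

lemma inv_poly_approx_continuous:
  assumes g: "continuous_on {0..1} g" and e: "e > 0"
  shows "\<exists>a M. integral {1..} (\<lambda>x. (g (1 / x) / x - inv_poly a M x)^2) \<le> e"
proof -
  define \<eta> where "\<eta> = sqrt e"
  have \<eta>: "\<eta> > 0" "\<eta>^2 = e" using e by (auto simp: \<eta>_def)
  obtain q where q: "real_polynomial_function q" "\<And>y. y \<in> {0..1} \<Longrightarrow> \<bar>g y - q y\<bar> < \<eta>"
    using Stone_Weierstrass_real_polynomial_function[OF compact_Icc g \<eta>(1)] by blast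
  obtain a M where aM: "q = (\<lambda>x. \<Sum>i\<le>M. a i * x^i)"
    using real_polynomial_function_imp_sum[OF q(1)] by blast
  have P: "inv_poly a M x = q (1 / x) / x" for x
    by (simp add: inv_poly_def aM sum_divide_distrib power_divide mult.commute)
  have "integral {1..} (\<lambda>x. (g (1 / x) / x - inv_poly a M x)^2) \<le> integral {1..} (\<lambda>x. \<eta>^2 * (1 / x^2))"
  proof (rule integral_le)
    show "(\<lambda>x. (g (1 / x) / x - inv_poly a M x)^2) integrable_on {1..}"
      by (intro integrable_inv_bounded_sq inv_bounded_diff inv_bounded_comp_inverse g inv_bounded_inv_poly)
    show "(\<lambda>x::real. \<eta>^2 * (1 / x^2)) integrable_on {1..}"
      using inverse_sq_has_integral by (intro integrable_on_mult_right) blast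
    fix x :: real assume x: "x \<in> {1..}"
    then have "\<bar>g (1/x) - q (1/x)\<bar> < \<eta>" by (intro q(2)) auto
    then have "\<bar>g (1/x) - q (1/x)\<bar> / x \<le> \<eta> / x" using x by (intro divide_right_mono) auto
    then have "\<bar>g (1 / x) / x - inv_poly a M x\<bar> \<le> \<eta> / x"
      by (simp add: P diff_divide_distrib[symmetric] abs_divide) (use x in auto)
    then have "\<bar>g (1 / x) / x - inv_poly a M x\<bar>^2 \<le> (\<eta> / x)^2" by (intro power_mono) auto
    then show "(g (1 / x) / x - inv_poly a M x)^2 \<le> \<eta>^2 * (1 / x^2)" by (simp add: power_divide)
  qed
  also have "\<dots> = e"
    using integral_unique[OF has_integral_mult_right[OF inverse_sq_has_integral, of "\<eta>^2"]] \<eta> by simp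
  finally show ?thesis by blast
qed

lemma integral_sq_diff_le:
  assumes f: "inv_bounded f" and g: "inv_bounded g" and h: "inv_bounded h"
  shows "integral {1..} (\<lambda>x. (f x - h x)^2) \<le>
           2 * integral {1..} (\<lambda>x. (f x - g x)^2) + 2 * integral {1..} (\<lambda>x. (g x - h x)^2)"
proof -
  have int: "(\<lambda>x. (u x - v x)^2) integrable_on {1..}" if "inv_bounded u" "inv_bounded v" for u v
    using that by (intro integrable_inv_bounded_sq inv_bounded_diff)
  have "integral {1..} (\<lambda>x. (f x - h x)^2) \<le>
          integral {1..} (\<lambda>x. 2 * (f x - g x)^2 + 2 * (g x - h x)^2)"
  proof (rule integral_le)
    show "(\<lambda>x. 2 * (f x - g x)^2 + 2 * (g x - h x)^2) integrable_on {1..}"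
      using f g h by (intro integrable_add integrable_on_mult_right int)
    show "(f x - h x)^2 \<le> 2 * (f x - g x)^2 + 2 * (g x - h x)^2" for x
      using sq_add_le[of "f x - g x" "g x - h x"] by simp
  qed (use f h int in auto)
  also have "\<dots> = 2 * integral {1..} (\<lambda>x. (f x - g x)^2) + 2 * integral {1..} (\<lambda>x. (g x - h x)^2)"
    using f g h by (simp add: integral_add integrable_on_mult_right int)
  finally show ?thesis .
qed

lemma frac_over_x_approx_by_inv_poly:
  assumes e: "e > 0"
  shows "\<exists>a M. integral {1..} (\<lambda>x. (frac_over_x x - inv_poly a M x)^2) < e"
proof -
  obtain m where m: "integral {1..} (\<lambda>x. (frac_over_x x - frac_approx m x)^2) < e / 4"
  proof -
    obtain m where "norm (integral {1..} (\<lambda>x. (frac_over_x x - frac_approx m x)^2) - 0) < e / 4"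
      using LIMSEQ_D[OF frac_approx_sq_dist_tendsto_0, of "e/4"] e by auto
    then show ?thesis
      by (intro that) (simp only: real_norm_def diff_zero, rule le_less_trans[OF abs_ge_self])
  qed
  obtain a M where aM: "integral {1..} (\<lambda>x. (frac_approx m x - inv_poly a M x)^2) \<le> e / 4"
    using inv_poly_approx_continuous[OF continuous_on_frac_cutoff_recip, of "e/4" m] e
    by (auto simp: frac_approx_def)
  have "integral {1..} (\<lambda>x. (frac_over_x x - inv_poly a M x)^2) < e"
    using integral_sq_diff_le[OF inv_bounded_frac_over_x inv_bounded_frac_approx[of m]
                                 inv_bounded_inv_poly[of a M]] m aM
    by linarith
  then show ?thesis by blast
qed

lemma has_integral_telescoping:
  fixes \<phi> :: "real \<Rightarrow> real"
  assumes step: "\<And>N. N \<ge> 1 \<Longrightarrow> (\<phi> has_integral (T (Suc N) - T N)) {real N..real (Suc N)}"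
    and T1: "T 1 = 0" and N: "N \<ge> 1"
  shows "(\<phi> has_integral T N) {1..real N}"
  using N
proof (induction N rule: dec_induct)
  case base then show ?case using T1 has_integral_refl(2)[of \<phi> "1::real"] by simp
next
  case (step N)
  have "(\<phi> has_integral (T N + (T (Suc N) - T N))) {1..real (Suc N)}"
    by (rule has_integral_combine[OF _ _ step.IH assms(1)]) (use step.hyps in auto)
  then show ?case by simp
qed

lemma frac_eq_on_unit_interval:
  "x \<in> {real N..real (Suc N)} - {real (Suc N)} \<Longrightarrow> frac x = x - real N"
proof -
  assume "x \<in> {real N..real (Suc N)} - {real (Suc N)}"
  then have "floor x = int N" by (auto simp: floor_eq_iff)
  then show ?thesis by (simp add: frac_def)
qed

lemma integral_nat_intervals_tendsto:
  fixes \<phi> h :: "real \<Rightarrow> real"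
  assumes meas: "\<phi> \<in> borel_measurable (lebesgue_on {1..})" and h: "h integrable_on {1..}"
    and bound: "\<And>x. x \<ge> 1 \<Longrightarrow> \<bar>\<phi> x\<bar> \<le> h x"
  shows "\<phi> integrable_on {1..}" "(\<lambda>N. integral {1..real N} \<phi>) \<longlonglongrightarrow> integral {1..} \<phi>"
proof -
  show int: "\<phi> integrable_on {1..}"
    by (rule measurable_bounded_by_integrable_imp_integrable[OF meas h]) (auto intro: bound)
  let ?\<phi>N = "\<lambda>N x. if x \<in> {1..real N} then \<phi> x else 0"
  have "(\<lambda>N. integral {1..} (?\<phi>N N)) \<longlonglongrightarrow> integral {1..} \<phi>"
  proof (rule Equivalence_Lebesgue_Henstock_Integration.dominated_convergence(2)[where h=h])
    show "?\<phi>N N integrable_on {1..}" for N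
    proof -
      have "{1..real N} \<inter> {1..} = {1..real N}" by auto
      then show ?thesis unfolding integrable_restrict_Int using int by (auto intro: integrable_on_subinterval)
    qed
    show "h integrable_on {1..}" by fact
    fix N and x :: real assume "x \<in> {1..}"
    then show "norm (?\<phi>N N x) \<le> h x"
      using bound[of x] by auto
  next
    fix x :: real assume x: "x \<in> {1..}"
    obtain M :: nat where M: "real M \<ge> x" using real_arch_simple by blast
    have "\<forall>\<^sub>F N in sequentially. ?\<phi>N N x = \<phi> x"
      using x M by (auto simp: eventually_at_top_linorder intro!: exI[of _ M] order_trans[OF M])
    then show "(\<lambda>N. ?\<phi>N N x) \<longlonglongrightarrow> \<phi> x"
      by (rule tendsto_eventually)
  qed
  moreover have "integral {1..} (?\<phi>N N) = integral {1..real N} \<phi>" for N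
    by (subst integral_restrict_Int) (auto simp: Int_absorb2 intro!: arg_cong[where f="\<lambda>S. integral S \<phi>"])
  ultimately show "(\<lambda>N. integral {1..real N} \<phi>) \<longlonglongrightarrow> integral {1..} \<phi>" by simp
qed

section \<open>The value of \<open>\<integral>\<^sub>1\<^sup>\<infinity> {x}\<^sup>2/x\<^sup>2 dx\<close>\<close>

definition frac_sq_integral_upto :: "nat \<Rightarrow> real" where
  "frac_sq_integral_upto N = 2 * real N - 1 - harm N - 2 * real N * ln (real N) + 2 * ln (fact N)"

lemma frac_sq_div_sq_has_integral_unit_interval:
  fixes N :: nat assumes N: "N \<ge> 1"
  shows "((\<lambda>x. frac x ^ 2 / x ^ 2) has_integral
            (frac_sq_integral_upto (Suc N) - frac_sq_integral_upto N)) {real N..real (Suc N)}"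
proof -
  define A where "A = (\<lambda>x::real. x - 2 * real N * ln x - real N ^ 2 / x)"
  have "((\<lambda>x. (x - real N) ^ 2 / x ^ 2) has_integral (A (real (Suc N)) - A (real N))) {real N..real (Suc N)}"
  proof (rule fundamental_theorem_of_calculus)
    show "real N \<le> real (Suc N)" by simp
    fix x assume x: "x \<in> {real N..real (Suc N)}"
    then have "x > 0" using N by auto
    then have "(A has_real_derivative (x - real N) ^ 2 / x ^ 2) (at x)"
      unfolding A_def by (auto intro!: derivative_eq_intros simp: field_simps power2_eq_square)
    then show "(A has_vector_derivative (x - real N) ^ 2 / x ^ 2) (at x within {real N..real (Suc N)})"
      by (simp add: has_real_derivative_iff_has_vector_derivative[symmetric] has_field_derivative_at_within)
  qed
  also have "A (real (Suc N)) - A (real N) = frac_sq_integral_upto (Suc N) - frac_sq_integral_upto N"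
  proof -
    have "ln (fact (Suc N) :: real) = ln (real (Suc N)) + ln (fact N)"
      by (simp add: ln_mult)
    then show ?thesis using N
      by (simp add: A_def frac_sq_integral_upto_def harm_Suc field_simps power2_eq_square)
  qed
  finally have pieces: "((\<lambda>x. (x - real N) ^ 2 / x ^ 2) has_integral
                   (frac_sq_integral_upto (Suc N) - frac_sq_integral_upto N)) {real N..real (Suc N)}" .
  show ?thesis
    by (rule has_integral_spike_finite[OF _ _ pieces, of "{real (Suc N)}"]) (auto simp: frac_eq_on_unit_interval)
qed

definition stirling_remainder :: "nat \<Rightarrow> real" where
  "stirling_remainder n = ln (fact n) - (real n + 1/2) * ln (real n) + real n"

lemma wallis_partial_product_eq:
  "(\<Prod>k=1..n. (4*real k^2) / (4*real k^2 - 1)) = (2^n * fact n)^4 / ((fact (2*n))^2 * real (2*n+1))"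
proof (induction n)
  case 0 then show ?case by simp
next
  case (Suc n)
  have step: "a^4 / (b^2 * (2*m+1)) * (4*(m+1)^2 / (4*(m+1)^2 - 1)) =
              (2*(m+1)*a)^4 / ((b*(2*m+1)*(2*m+2))^2 * (2*m+3))"
    if "a > 0" "b > 0" "m \<ge> 0" for a b m :: real
  proof -
    have "4*(m+1)^2 - 1 = (2*m+1)*(2*m+3)" by (simp add: power2_eq_square algebra_simps)
    then show ?thesis using that
      by (simp add: divide_simps) (simp add: power2_eq_square power4_eq_xxxx algebra_simps)
  qed
  have "fact (2 * Suc n) = (fact (2*n) :: real) * (2*real n+1) * (2*real n+2)"
    by (simp add: algebra_simps)
  with step[of "2^n * fact n" "fact (2*n)" "real n"] Suc.IH show ?case
    by (simp add: prod.cl_ivl_Suc algebra_simps)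
qed

lemma ln_wallis_partial_product:
  assumes "n \<ge> 1"
  shows "ln ((2^n * fact n)^4 / ((fact (2*n))^2 * real (2*n+1)) :: real) =
         4 * stirling_remainder n - 2 * stirling_remainder (2*n) - ln 2 - ln ((2 * real n + 1) / real n)"
proof -
  have "ln ((2^n * fact n)^4 / ((fact (2*n))^2 * real (2*n+1)) :: real) =
        4 * (real n * ln 2 + ln (fact n)) - 2 * ln (fact (2*n)) - ln (real (2*n+1))"
    by (simp add: ln_div ln_mult ln_realpow)
  also have "\<dots> = 4 * stirling_remainder n - 2 * stirling_remainder (2*n) - ln 2 - ln ((2 * real n + 1) / real n)"
    using assms by (simp add: stirling_remainder_def ln_div ln_mult algebra_simps)
  finally show ?thesis .
qed

text \<open>Only the value of the limit is derived here; its existence will follow from the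
  convergence of \<open>\<integral>\<^sub>1\<^sup>\<infinity> {x}\<^sup>2/x\<^sup>2 dx\<close>.\<close>

lemma stirling_remainder_limit:
  assumes lim: "stirling_remainder \<longlonglongrightarrow> D"
  shows "D = ln (2 * pi) / 2"
proof -
  let ?w = "\<lambda>n. 4 * stirling_remainder n - 2 * stirling_remainder (2*n) - ln 2 - ln ((2 * real n + 1) / real n)"
  have double: "(\<lambda>n. stirling_remainder (2*n)) \<longlonglongrightarrow> D"
    using LIMSEQ_subseq_LIMSEQ[OF lim, of "\<lambda>n. 2*n"] by (simp add: strict_mono_def o_def)
  have ln_ratio: "(\<lambda>n. ln ((2 * real n + 1) / real n)) \<longlonglongrightarrow> ln 2"
    by real_asymp
  have "?w \<longlonglongrightarrow> 4 * D - 2 * D - ln 2 - ln 2"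
    by (intro tendsto_intros lim double ln_ratio)
  moreover have "\<forall>\<^sub>F n in sequentially. ?w n = ln (\<Prod>k=1..n. (4*real k^2) / (4*real k^2 - 1))"
  proof (rule eventually_at_top_linorderI)
    fix n :: nat assume "n \<ge> 1"
    then show "?w n = ln (\<Prod>k=1..n. (4*real k^2) / (4*real k^2 - 1))"
      unfolding wallis_partial_product_eq by (rule ln_wallis_partial_product[symmetric])
  qed
  ultimately have "(\<lambda>n. ln (\<Prod>k=1..n. (4*real k^2) / (4*real k^2 - 1))) \<longlonglongrightarrow> 4 * D - 2 * D - ln 2 - ln 2"
    by (rule Lim_transform_eventually)
  moreover have "(\<lambda>n. ln (\<Prod>k=1..n. (4*real k^2) / (4*real k^2 - 1))) \<longlonglongrightarrow> ln (pi / 2)"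
    by (intro tendsto_ln wallis) simp
  ultimately have "2 * D = ln (pi / 2) + 2 * ln 2"
    using LIMSEQ_unique by fastforce
  also have "ln (pi / 2) + 2 * ln 2 = ln (2 * pi)"
    by (simp add: ln_div ln_mult)
  finally show ?thesis by simp
qed

lemma frac_sq_div_sq_has_integral:
  "((\<lambda>x::real. frac x ^ 2 / x ^ 2) has_integral (ln (2 * pi) - euler_mascheroni - 1)) {1..}"
proof -
  define \<phi> where "\<phi> = (\<lambda>x::real. frac x ^ 2 / x ^ 2)"
  have meas: "\<phi> \<in> borel_measurable (lebesgue_on {1..})"
    unfolding \<phi>_def by measurable
  have bound: "\<bar>\<phi> x\<bar> \<le> 1 / x^2" if "x \<ge> 1" for x
  proof -
    have "frac x ^ 2 \<le> 1" using frac_lt_1[of x] by (simp add: power_le_one)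
    then show ?thesis using that by (simp add: \<phi>_def divide_right_mono)
  qed
  note lim = integral_nat_intervals_tendsto[OF meas has_integral_integrable[OF inverse_sq_has_integral] bound]
  define I where "I = integral {1..} \<phi>"
  have "frac_sq_integral_upto 1 = 0" by (simp add: frac_sq_integral_upto_def harm_def)
  then have "(\<phi> has_integral frac_sq_integral_upto N) {1..real N}" if "N \<ge> 1" for N
    using has_integral_telescoping[where \<phi>=\<phi> and T=frac_sq_integral_upto, OF _ _ that]
          frac_sq_div_sq_has_integral_unit_interval
    unfolding \<phi>_def by blast
  then have "frac_sq_integral_upto \<longlonglongrightarrow> I"
    using lim(2) unfolding I_def
    by (rule_tac Lim_transform_eventually) (auto simp: integral_unique eventually_at_top_linorder intro!: exI[of _ 1])
  then have "(\<lambda>N. (frac_sq_integral_upto N + 1 + (harm N - ln (real N))) / 2) \<longlonglongrightarrow> (I + 1 + euler_mascheroni) / 2"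
    by (intro tendsto_intros euler_mascheroni_LIMSEQ) auto
  moreover have "\<forall>\<^sub>F N in sequentially. (frac_sq_integral_upto N + 1 + (harm N - ln (real N))) / 2 = stirling_remainder N"
    by (auto simp: frac_sq_integral_upto_def stirling_remainder_def eventually_at_top_linorder field_simps intro!: exI[of _ 1])
  ultimately have "stirling_remainder \<longlonglongrightarrow> (I + 1 + euler_mascheroni) / 2"
    by (rule Lim_transform_eventually)
  from stirling_remainder_limit[OF this] have "I = ln (2 * pi) - euler_mascheroni - 1" by simp
  with integrable_integral[OF lim(1)] show ?thesis unfolding I_def \<phi>_def by simp
qed

section \<open>Stieltjes constants as integrals\<close>

definition frac_log_moment :: "nat \<Rightarrow> real" where
  "frac_log_moment k = integral {1..} (\<lambda>x::real. frac x * ln x ^ k / x ^ 2)"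

lemma integrable_frac_log_moment: "(\<lambda>x::real. frac x * ln x ^ k / x ^ 2) integrable_on {1..}"
proof (rule measurable_bounded_by_integrable_imp_integrable)
  show "(\<lambda>x::real. frac x * ln x ^ k / x ^ 2) \<in> borel_measurable (lebesgue_on {1..})"
    by measurable
  show "(\<lambda>x::real. ln x ^ k / x ^ 2) integrable_on {1..}"
    using log_moment_sq_has_integral by blast
  fix x :: real assume x: "x \<in> {1..}"
  have "frac x * ln x ^ k \<le> 1 * ln x ^ k"
    using x frac_lt_1[of x] by (intro mult_right_mono) auto
  then show "norm (frac x * ln x ^ k / x ^ 2) \<le> ln x ^ k / x ^ 2"
    using x by (auto simp: abs_mult divide_right_mono)
qed auto

definition stieltjes_partial :: "nat \<Rightarrow> nat \<Rightarrow> real" where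
  "stieltjes_partial j N = (\<Sum>k=1..N. ln (real k) ^ j / real k) - ln (real N) ^ (Suc j) / real (Suc j)"

text \<open>\<open>{x}\<close> times the derivative of \<open>ln\<^sup>j x / x\<close>: the remainder term in comparing the sum defining
  \<open>\<gamma>\<^sub>j\<close> with the corresponding integral.\<close>

definition stieltjes_integrand :: "nat \<Rightarrow> real \<Rightarrow> real" where
  "stieltjes_integrand j x = frac x * (real j * ln x ^ (j - 1) - ln x ^ j) / x ^ 2"

lemma stieltjes_piece_primitive_has_derivative:
  assumes x: "x > 0"
  shows "((\<lambda>x. ln x ^ j - c * (ln x ^ j / x) - ln x ^ Suc j / real (Suc j)) has_real_derivative
            (x - c) * (real j * ln x ^ (j - 1) - ln x ^ j) / x ^ 2) (at x)"
proof -
  have ln_pow: "((\<lambda>x. ln x ^ i) has_real_derivative (real i * ln x ^ (i - 1) / x)) (at x)" for i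
    using x by (auto intro!: derivative_eq_intros simp: field_simps)
  have "((\<lambda>x. ln x ^ j / x) has_real_derivative
             ((real j * ln x ^ (j - 1) / x) * x - ln x ^ j * 1) / (x * x)) (at x)"
    by (rule DERIV_divide[OF ln_pow DERIV_ident]) (use x in auto)
  then have "((\<lambda>x. ln x ^ j - c * (ln x ^ j / x) - ln x ^ Suc j / real (Suc j)) has_real_derivative
               (real j * ln x ^ (j - 1) / x)
               - c * (((real j * ln x ^ (j - 1) / x) * x - ln x ^ j * 1) / (x * x))
               - (real (Suc j) * ln x ^ (Suc j - 1) / x) / real (Suc j)) (at x)"
    by (intro DERIV_diff DERIV_cmult DERIV_cdivide ln_pow)
  moreover have "(real j * ln x ^ (j - 1) / x)
               - c * (((real j * ln x ^ (j - 1) / x) * x - ln x ^ j * 1) / (x * x))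
               - (real (Suc j) * ln x ^ (Suc j - 1) / x) / real (Suc j) =
                 (x - c) * (real j * ln x ^ (j - 1) - ln x ^ j) / x ^ 2"
    using x by (simp add: field_simps power2_eq_square del: of_nat_Suc)
  ultimately show ?thesis by simp
qed

lemma stieltjes_integrand_has_integral_unit_interval:
  fixes N :: nat assumes N: "N \<ge> 1"
  shows "(stieltjes_integrand j has_integral (stieltjes_partial j (Suc N) - stieltjes_partial j N))
           {real N..real (Suc N)}"
proof -
  define A where "A = (\<lambda>x::real. ln x ^ j - real N * (ln x ^ j / x) - ln x ^ Suc j / real (Suc j))"
  let ?f = "\<lambda>x. (x - real N) * (real j * ln x ^ (j - 1) - ln x ^ j) / x ^ 2"
  have "(?f has_integral (A (real (Suc N)) - A (real N))) {real N..real (Suc N)}"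
  proof (rule fundamental_theorem_of_calculus)
    show "real N \<le> real (Suc N)" by simp
    fix x assume "x \<in> {real N..real (Suc N)}"
    then have "(A has_real_derivative ?f x) (at x)"
      unfolding A_def using N by (intro stieltjes_piece_primitive_has_derivative) auto
    then show "(A has_vector_derivative ?f x) (at x within {real N..real (Suc N)})"
      by (simp add: has_real_derivative_iff_has_vector_derivative[symmetric] has_field_derivative_at_within)
  qed
  also have "A (real (Suc N)) - A (real N) = stieltjes_partial j (Suc N) - stieltjes_partial j N"
  proof -
    have "ln (real (Suc N)) ^ j - real N * (ln (real (Suc N)) ^ j / real (Suc N)) =
          ln (real (Suc N)) ^ j / real (Suc N)"
      by (simp add: field_simps)
    then show ?thesis
      using N by (simp add: A_def stieltjes_partial_def diff_divide_distrib)
  qed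
  finally have pieces: "(?f has_integral (stieltjes_partial j (Suc N) - stieltjes_partial j N))
                          {real N..real (Suc N)}" .
  show ?thesis
    by (rule has_integral_spike_finite[OF _ _ pieces, of "{real (Suc N)}"])
       (auto simp: frac_eq_on_unit_interval stieltjes_integrand_def)
qed

lemma integral_stieltjes_integrand:
  "integral {1..} (stieltjes_integrand j) = real j * frac_log_moment (j - 1) - frac_log_moment j"
proof -
  define g where "g k = (\<lambda>x::real. frac x * ln x ^ k / x ^ 2)" for k
  have "stieltjes_integrand j = (\<lambda>x. real j * g (j-1) x - g j x)"
    by (rule ext) (simp add: stieltjes_integrand_def g_def right_diff_distrib diff_divide_distrib mult_ac)
  moreover have "g k integrable_on {1..}" for k
    unfolding g_def by (rule integrable_frac_log_moment)
  ultimately show ?thesis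
    by (simp add: frac_log_moment_def g_def[symmetric] integral_diff integrable_on_mult_right)
qed

lemma stieltjes_eq_frac_log_moments:
  "stieltjes j = (if j = 0 then 1 else 0) + real j * frac_log_moment (j - 1) - frac_log_moment j"
proof -
  let ?c = "if j = 0 then 1 else 0 :: real"
  have meas: "stieltjes_integrand j \<in> borel_measurable (lebesgue_on {1..})"
    unfolding stieltjes_integrand_def by measurable
  have dom: "(\<lambda>x::real. real j * (ln x ^ (j-1) / x^2) + ln x ^ j / x^2) integrable_on {1..}"
    by (intro integrable_add integrable_on_mult_right has_integral_integrable[OF log_moment_sq_has_integral])
  have bound: "\<bar>stieltjes_integrand j x\<bar> \<le> real j * (ln x ^ (j-1) / x^2) + ln x ^ j / x^2" if x: "x \<ge> 1" for x
  proof -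
    have "0 \<le> real j * ln x ^ (j-1)" "0 \<le> ln x ^ j" using x by auto
    then have "\<bar>real j * ln x ^ (j - 1) - ln x ^ j\<bar> \<le> real j * ln x ^ (j - 1) + ln x ^ j" by auto
    then have "frac x * \<bar>real j * ln x ^ (j - 1) - ln x ^ j\<bar> / x ^ 2 \<le> 1 * (real j * ln x ^ (j - 1) + ln x ^ j) / x ^ 2"
      using x frac_lt_1[of x] by (intro divide_right_mono mult_mono) auto
    then show ?thesis
      using x by (simp add: stieltjes_integrand_def abs_mult abs_divide add_divide_distrib)
  qed
  note lim = integral_nat_intervals_tendsto[OF meas dom bound]
  have "stieltjes_partial j 1 - ?c = 0" by (simp add: stieltjes_partial_def)
  then have "integral {1..real N} (stieltjes_integrand j) = stieltjes_partial j N - ?c" if "N \<ge> 1" for N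
    using has_integral_telescoping[where T="\<lambda>N. stieltjes_partial j N - ?c", OF _ _ that]
          stieltjes_integrand_has_integral_unit_interval
    by (simp add: integral_unique)
  then have "stieltjes_partial j \<longlonglongrightarrow> ?c + integral {1..} (stieltjes_integrand j)"
    using tendsto_add[OF tendsto_const[of ?c] lim(2)]
    by (rule_tac Lim_transform_eventually) (auto simp: eventually_at_top_linorder intro!: exI[of _ 1])
  then have "stieltjes j = ?c + integral {1..} (stieltjes_integrand j)"
    unfolding stieltjes_def stieltjes_partial_def by (rule limI)
  then show ?thesis by (simp add: integral_stieltjes_integrand)
qed

lemma frac_log_moment_eq: "frac_log_moment k = fact k * (1 - (\<Sum>j\<le>k. stieltjes j / fact j))"
proof (induction k)
  case 0 then show ?case using stieltjes_eq_frac_log_moments[of 0] by simp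
next
  case (Suc k)
  have "frac_log_moment (Suc k) = real (Suc k) * frac_log_moment k - stieltjes (Suc k)"
    using stieltjes_eq_frac_log_moments[of "Suc k"] by simp
  also have "\<dots> = fact (Suc k) * (1 - (\<Sum>j\<le>Suc k. stieltjes j / fact j))"
  proof -
    have "fact (Suc k) * (stieltjes (Suc k) / fact (Suc k)) = stieltjes (Suc k)" by simp
    moreover have "fact (Suc k) = real (Suc k) * (fact k :: real)" by simp
    ultimately show ?thesis
      unfolding Suc.IH by (simp add: algebra_simps del: fact_Suc)
  qed
  finally show ?case .
qed

lemma stieltjes_0: "stieltjes 0 = euler_mascheroni"
proof -
  have "stieltjes_partial 0 = (\<lambda>N. harm N - ln (real N))"
    by (auto simp: stieltjes_partial_def harm_def divide_inverse)
  then show ?thesis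
    using euler_mascheroni_LIMSEQ unfolding stieltjes_def stieltjes_partial_def[abs_def] by (simp add: limI)
qed

section \<open>The Laguerre coefficients of \<open>{x}/x\<close>\<close>

lemma laguerre_fourier_frac_over_x:
  "laguerre_fourier frac_over_x n = (\<Sum>k\<le>n. laguerre_coeff n k * frac_log_moment k)"
proof -
  define g where "g k = (\<lambda>x::real. frac x * ln x ^ k / x ^ 2)" for k
  have "(\<lambda>x. frac_over_x x * laguerre_fun n x) = (\<lambda>x. \<Sum>k\<le>n. laguerre_coeff n k * g k x)"
    by (rule ext) (simp add: g_def frac_over_x_def laguerre_fun_def sum_distrib_left
                             sum_divide_distrib power2_eq_square mult_ac)
  moreover have "(g k has_integral frac_log_moment k) {1..}" for k
    unfolding g_def frac_log_moment_def by (rule integrable_integral[OF integrable_frac_log_moment])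
  then have "((\<lambda>x. \<Sum>k\<le>n. laguerre_coeff n k * g k x) has_integral
               (\<Sum>k\<le>n. laguerre_coeff n k * frac_log_moment k)) {1..}"
    by (intro has_integral_sum has_integral_mult_right) auto
  ultimately show ?thesis
    unfolding laguerre_fourier_def by (simp add: integral_unique)
qed

lemma sum_alternating_choose_upto:
  assumes "n \<ge> 1"
  shows "(\<Sum>k\<le>m. (-1)^k * real (n choose k)) = (-1)^m * real ((n - 1) choose m)"
  using gbinomial_sum_lower_neg[of "real n" m] assms
  by (simp add: binomial_gbinomial of_nat_diff mult.commute)

lemma sum_alternating_choose_from:
  assumes "n \<ge> 1"
  shows "(\<Sum>k\<le>n. if j \<le> k then real (n choose k) * (-1)^k else 0) =
         (if j = 0 then 0 else (-1)^j * real ((n - 1) choose (j - 1)))"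
proof -
  have total: "(\<Sum>k\<le>n. (-1)^k * real (n choose k)) = 0"
    using choose_alternating_sum[of n, where 'a=real] assms by simp
  show ?thesis
  proof (cases j)
    case 0
    then show ?thesis using total by (simp add: mult.commute)
  next
    case (Suc i)
    have "(\<Sum>k\<le>n. (-1)^k * real (n choose k)) =
          (\<Sum>k\<le>n. if j \<le> k then real (n choose k) * (-1)^k else 0) +
          (\<Sum>k\<le>n. if k \<le> i then (-1)^k * real (n choose k) else 0)"
      by (subst sum.distrib[symmetric], rule sum.cong) (auto simp: Suc)
    also have "(\<Sum>k\<le>n. if k \<le> i then (-1)^k * real (n choose k) else 0) =
               (\<Sum>k\<le>i. (-1)^k * real (n choose k))"
    proof (cases "i \<le> n")
      case True
      then have "{..n} \<inter> {..i} = {..i}" by auto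
      then show ?thesis
        using sum.inter_restrict[of "{..n}" "\<lambda>k. (-1)^k * real (n choose k)" "{..i}"] by simp
    next
      case False
      then have "(\<Sum>k\<le>i. (-1)^k * real (n choose k)) = (\<Sum>k\<le>n. (-1)^k * real (n choose k))"
        by (intro sum.mono_neutral_right) (auto simp: binomial_eq_0)
      then show ?thesis using False by simp
    qed
    also have "\<dots> = (-1)^i * real ((n-1) choose i)"
      by (rule sum_alternating_choose_upto[OF assms])
    finally show ?thesis using total Suc by simp
  qed
qed

lemma sum_alternating_choose_mult_partial_sums:
  fixes g :: "nat \<Rightarrow> real"
  assumes "n \<ge> 1"
  shows "(\<Sum>k\<le>n. real (n choose k) * (-1)^k * (\<Sum>j\<le>k. g j)) =
         (\<Sum>j=1..n. (-1)^j * real ((n - 1) choose (j - 1)) * g j)"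
proof -
  have "real (n choose k) * (-1)^k * (\<Sum>j\<le>k. g j) =
          (\<Sum>j\<le>n. (if j \<le> k then real (n choose k) * (-1)^k else 0) * g j)" if "k \<le> n" for k
  proof -
    have "(\<Sum>j\<le>n. (if j \<le> k then real (n choose k) * (-1)^k else 0) * g j) =
          (\<Sum>j\<in>{..n} \<inter> {..k}. real (n choose k) * (-1)^k * g j)"
      by (subst sum.inter_restrict) (auto intro!: sum.cong)
    also have "{..n} \<inter> {..k} = {..k}" using that by auto
    finally show ?thesis by (simp add: sum_distrib_left)
  qed
  then have "(\<Sum>k\<le>n. real (n choose k) * (-1)^k * (\<Sum>j\<le>k. g j)) =
             (\<Sum>k\<le>n. \<Sum>j\<le>n. (if j \<le> k then real (n choose k) * (-1)^k else 0) * g j)"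
    by (intro sum.cong) auto
  also have "\<dots> = (\<Sum>j\<le>n. (\<Sum>k\<le>n. if j \<le> k then real (n choose k) * (-1)^k else 0) * g j)"
    by (subst sum.swap) (simp add: sum_distrib_right)
  also have "\<dots> = (\<Sum>j\<le>n. (if j = 0 then 0 else (-1)^j * real ((n - 1) choose (j - 1))) * g j)"
    by (simp add: sum_alternating_choose_from[OF assms])
  also have "\<dots> = (\<Sum>j=1..n. (-1)^j * real ((n - 1) choose (j - 1)) * g j)"
    by (rule sum.mono_neutral_cong_right) auto
  finally show ?thesis .
qed

lemma minus_one_power_diff: "k \<le> n \<Longrightarrow> (-1 :: 'a :: comm_ring_1) ^ (n - k) = (-1)^n * (-1)^k"
proof -
  assume "k \<le> n"
  then obtain d where d: "n = k + d" using le_Suc_ex by blast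
  have "(-1 :: 'a)^k * (-1)^k = 1" by (simp flip: power_mult_distrib)
  then show ?thesis unfolding d by (simp add: power_add mult_ac)
qed

lemma laguerre_fourier_frac_over_x_eq_ell:
  "laguerre_fourier frac_over_x n = - ((-1)^n * ell n)"
proof (cases "n = 0")
  case True
  then show ?thesis
    by (simp add: laguerre_fourier_frac_over_x laguerre_coeff_def frac_log_moment_eq stieltjes_0 ell_def)
next
  case False
  define g where "g j = stieltjes j / fact j" for j
  have "laguerre_fourier frac_over_x n = (\<Sum>k\<le>n. real (n choose k) * (-1)^k * (1 - (\<Sum>j\<le>k. g j)))"
    unfolding laguerre_fourier_frac_over_x frac_log_moment_eq g_def
    by (rule sum.cong) (auto simp: laguerre_coeff_def)
  also have "\<dots> = (\<Sum>k\<le>n. real (n choose k) * (-1)^k) - (\<Sum>k\<le>n. real (n choose k) * (-1)^k * (\<Sum>j\<le>k. g j))"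
    by (simp add: right_diff_distrib sum_subtractf)
  also have "(\<Sum>k\<le>n. real (n choose k) * (-1)^k) = 0"
    using choose_alternating_sum[of n, where 'a=real] False by (simp add: mult.commute)
  also have "(\<Sum>k\<le>n. real (n choose k) * (-1)^k * (\<Sum>j\<le>k. g j)) =
             (\<Sum>j=1..n. (-1)^j * real ((n - 1) choose (j - 1)) * g j)"
    using False by (simp add: sum_alternating_choose_mult_partial_sums)
  also have "\<dots> = (-1)^n * ell n"
  proof -
    have "ell n = (-1)^n * (\<Sum>j=1..n. (-1)^j * real ((n - 1) choose (j - 1)) * g j)"
      using False unfolding ell_def sum_distrib_left
      by (auto intro!: sum.cong simp: minus_one_power_diff g_def)
    then show ?thesis by (simp add: mult.assoc[symmetric] flip: power_mult_distrib)
  qed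
  finally show ?thesis by simp
qed

theorem mainTheorem12:
  shows "((\<lambda>x::real. frac x ^ 2 / x ^ 2) has_integral (ln (2 * pi) - euler_mascheroni - 1)) {1..}
         \<and> (\<lambda>n. ell n ^ 2) sums (ln (2 * pi) - euler_mascheroni - 1)"
proof
  show integral: "((\<lambda>x::real. frac x ^ 2 / x ^ 2) has_integral (ln (2 * pi) - euler_mascheroni - 1)) {1..}"
    by (rule frac_sq_div_sq_has_integral)
  have "(\<lambda>n. laguerre_fourier frac_over_x n ^ 2) sums integral {1..} (\<lambda>x. frac_over_x x ^ 2)"
    by (rule parseval_of_inv_poly_approximable[OF inv_bounded_frac_over_x frac_over_x_approx_by_inv_poly])
  moreover have "(\<lambda>x. frac_over_x x ^ 2) = (\<lambda>x::real. frac x ^ 2 / x ^ 2)"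
    by (simp add: frac_over_x_def power_divide)
  ultimately show "(\<lambda>n. ell n ^ 2) sums (ln (2 * pi) - euler_mascheroni - 1)"
    using integral_unique[OF integral]
    by (simp add: laguerre_fourier_frac_over_x_eq_ell power_mult_distrib flip: power_mult)
qed

end
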